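(* Let $\mathcal U$ be a finite set, $P$ a probability distribution on $\mathcal U$ with $P(u)>0$ for all $u$, and $d\ge2$ an integer. Let $l:\mathcal U\to\mathbb{N}$ be the codeword lengths of a uniquely decodable $d$-ary code satisfying $$l(u)\ \ge\ \left\lceil \log_d\frac{1}{P(u)}\right\rceil\quad\text{for all }u\in\mathcal U.$$ With $c_{d,l}=\sum_u d^{-l(u)}$, $Q_{d,l}(u)=d^{-l(u)}/c_{d,l}$, and average redundancy $\Delta_d=\sum_u P(u)l(u)+\sum_u P(u)\log_d P(u)$, we have $$J(P,Q_{d,l})\le\frac{\Delta_d\log d}{2}\qquad\text{and}\qquad \sum_{u\in\mathcal U}\big|P(u)-Q_{d,l}(u)\big|\ \le\ 2\,\varepsilon\!\left(\frac{\Delta_d\log d}{2}\right),$$ where for $x\ge0$, $\varepsilon(x)$ denotes the unique $\varepsilon\in[0,1)$ solving $\varepsilon\log\frac{1+\varepsilon}{1-\varepsilon}=x$.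
   Context: Jeffreys' divergence is $J(P,Q)=\frac{D(P\|Q)+D(Q\|P)}{2}$ with $D(P\|Q)=\sum_x P(x)\log\frac{P(x)}{Q(x)}$; $\log$ denotes the natural logarithm and $\log_d$ the base-$d$ logarithm. *)

theory Defs
  imports "HOL-Analysis.Analysis"
begin

definition dary_code :: "nat \<Rightarrow> 'a set \<Rightarrow> ('a \<Rightarrow> nat list) \<Rightarrow> bool" where
  "dary_code d U c \<longleftrightarrow> (\<forall>u\<in>U. set (c u) \<subseteq> {..<d})"

definition uniquely_decodable :: "'a set \<Rightarrow> ('a \<Rightarrow> nat list) \<Rightarrow> bool" where
  "uniquely_decodable U c \<longleftrightarrow>
     (\<forall>xs\<in>lists U. \<forall>ys\<in>lists U. concat (map c xs) = concat (map c ys) \<longrightarrow> xs = ys)"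

definition KL_div :: "'a set \<Rightarrow> ('a \<Rightarrow> real) \<Rightarrow> ('a \<Rightarrow> real) \<Rightarrow> real" where
  "KL_div U P Q = (\<Sum>x\<in>U. P x * ln (P x / Q x))"

definition jeffreys :: "'a set \<Rightarrow> ('a \<Rightarrow> real) \<Rightarrow> ('a \<Rightarrow> real) \<Rightarrow> real" where
  "jeffreys U P Q = (KL_div U P Q + KL_div U Q P) / 2"

definition kraft_sum :: "'a set \<Rightarrow> nat \<Rightarrow> ('a \<Rightarrow> nat) \<Rightarrow> real" where
  "kraft_sum U d l = (\<Sum>u\<in>U. real d powr (- real (l u)))"

definition Q_code :: "'a set \<Rightarrow> nat \<Rightarrow> ('a \<Rightarrow> nat) \<Rightarrow> 'a \<Rightarrow> real" where
  "Q_code U d l u = real d powr (- real (l u)) / kraft_sum U d l"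

definition redundancy :: "'a set \<Rightarrow> nat \<Rightarrow> ('a \<Rightarrow> real) \<Rightarrow> ('a \<Rightarrow> nat) \<Rightarrow> real" where
  "redundancy U d P l = (\<Sum>u\<in>U. P u * real (l u)) + (\<Sum>u\<in>U. P u * log (real d) (P u))"

definition eps_fun :: "real \<Rightarrow> real" where
  "eps_fun x = (THE e. 0 \<le> e \<and> e < 1 \<and> e * ln ((1 + e) / (1 - e)) = x)"

end

theory Submission
  imports Defs
begin

(* Write a u = d^(-l u) and c = sum of a u, so that Q = a / c.  The length condition
   l u >= ceil (log_d (1 / P u)) says exactly a u <= P u, i.e. Q u / P u <= 1 / c.  Then
     D(P||Q) = Delta_d ln d + ln c     and     D(Q||P) <= -ln c,
   whence 2 J(P,Q) <= Delta_d ln d.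
   For the second claim we prove a Pinsker-type inequality for Jeffreys' divergence:
   with t = (1/2) sum |P - Q| one has  phi t <= J(P,Q),  where phi e = e ln((1+e)/(1-e))
   is the function inverted by eps_fun.  It follows by coarse-graining both distributions
   onto the two-block partition {P >= Q}, {P < Q} (log-sum inequality) and an explicit
   bound for two-point distributions. *)

definition phi :: "real \<Rightarrow> real" where
  "phi e = e * ln ((1 + e) / (1 - e))"

lemma phi_zero [simp]: "phi 0 = 0"
  by (simp add: phi_def)

text \<open>phi is strictly increasing on [0,1): both factors are nonnegative and increasing.\<close>
lemma phi_strict_mono:
  assumes "0 \<le> a" "a < b" "b < 1"
  shows "phi a < phi b"
proof -
  have ratio_less: "(1 + a) / (1 - a) < (1 + b) / (1 - b)" and ratio_ge1: "1 \<le> (1 + a) / (1 - a)"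
    using assms by (simp_all add: field_simps)
  then have "ln ((1 + a) / (1 - a)) < ln ((1 + b) / (1 - b))" by simp
  then have "b * ln ((1 + a) / (1 - a)) < b * ln ((1 + b) / (1 - b))" using assms by simp
  moreover have "a * ln ((1 + a) / (1 - a)) \<le> b * ln ((1 + a) / (1 - a))"
    using ratio_ge1 assms by (intro mult_right_mono) auto
  ultimately show ?thesis by (simp add: phi_def)
qed

lemma phi_nonneg: "0 \<le> e \<Longrightarrow> e < 1 \<Longrightarrow> 0 \<le> phi e"
  using phi_strict_mono[of 0 e] by (cases "e = 0") auto

text \<open>phi takes every value x \<ge> 0 on [0,1): at e0 = max (1/2) (1 - exp (-2x)) it is
  already \<ge> x, so the intermediate value theorem applies on [0, e0].\<close>
lemma phi_surj:
  assumes "x \<ge> 0"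
  shows "\<exists>e. 0 \<le> e \<and> e < 1 \<and> phi e = x"
proof -
  define e0 where "e0 = max (1/2) (1 - exp (-2*x))"
  have e0: "1/2 \<le> e0" "e0 < 1" by (auto simp: e0_def)
  have "exp (2*x) \<le> 1 / (1 - e0)"
  proof -
    have "1 - e0 \<le> exp (-2*x)" by (auto simp: e0_def)
    then have "1 / exp (-2*x) \<le> 1 / (1 - e0)" using e0 by (intro divide_left_mono) auto
    then show ?thesis by (simp add: exp_minus field_simps)
  qed
  also have "\<dots> \<le> (1 + e0) / (1 - e0)" using e0 by (intro divide_right_mono) auto
  finally have "2*x \<le> ln ((1 + e0) / (1 - e0))" using e0 by (subst ln_ge_iff) auto
  then have "e0 * (2*x) \<le> phi e0" unfolding phi_def using e0 by (intro mult_left_mono) auto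
  moreover have "x \<le> e0 * (2*x)"
    using e0 assms mult_left_mono[of 1 "2*e0" x] by (simp add: algebra_simps)
  ultimately have x_le: "x \<le> phi e0" by linarith
  have "continuous_on {0..e0} phi" unfolding phi_def using e0
    by (intro continuous_intros) (auto simp: field_simps)
  from IVT'[of phi 0 x e0, OF _ x_le _ this] assms e0
  obtain e where "0 \<le> e" "e \<le> e0" "phi e = x" by auto
  then show ?thesis using e0 by auto
qed

lemma eps_fun_solves:
  assumes "x \<ge> 0"
  shows "0 \<le> eps_fun x" "eps_fun x < 1" "phi (eps_fun x) = x"
proof -
  have "\<exists>!e. 0 \<le> e \<and> e < 1 \<and> phi e = x"
  proof (rule ex_ex1I)
    show "\<exists>e. 0 \<le> e \<and> e < 1 \<and> phi e = x" using phi_surj[OF assms] .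
  next
    fix e1 e2 assume "0 \<le> e1 \<and> e1 < 1 \<and> phi e1 = x" "0 \<le> e2 \<and> e2 < 1 \<and> phi e2 = x"
    then show "e1 = e2" using phi_strict_mono by (metis linorder_neqE_linordered_idom order_less_irrefl)
  qed
  then have "0 \<le> eps_fun x \<and> eps_fun x < 1 \<and> phi (eps_fun x) = x"
    unfolding eps_fun_def phi_def[symmetric] by (rule theI')
  then show "0 \<le> eps_fun x" "eps_fun x < 1" "phi (eps_fun x) = x" by auto
qed

lemma le_eps_fun:
  assumes "0 \<le> t" "t < 1" "phi t \<le> x"
  shows "t \<le> eps_fun x"
proof (rule ccontr)
  have x: "0 \<le> x" using phi_nonneg[OF assms(1,2)] assms(3) by linarith
  assume "\<not> t \<le> eps_fun x"
  then have "phi (eps_fun x) < phi t" using eps_fun_solves[OF x] assms by (intro phi_strict_mono) auto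
  then show False using eps_fun_solves[OF x] assms by simp
qed

section \<open>A Pinsker-type inequality for Jeffreys' divergence\<close>

text \<open>The log-sum inequality, from ln y \<ge> 1 - 1/y applied to the ratios
  (a x / A) / (b x / B).\<close>
lemma log_sum_ineq:
  fixes a b :: "'a \<Rightarrow> real"
  assumes "finite S" "\<forall>x\<in>S. a x > 0" "\<forall>x\<in>S. b x > 0"
  shows "(\<Sum>x\<in>S. a x) * ln ((\<Sum>x\<in>S. a x) / (\<Sum>x\<in>S. b x)) \<le> (\<Sum>x\<in>S. a x * ln (a x / b x))"
proof (cases "S = {}")
  case False
  define A where "A = (\<Sum>x\<in>S. a x)"
  define B where "B = (\<Sum>x\<in>S. b x)"
  have A: "A > 0" unfolding A_def using assms False by (intro sum_pos) auto
  have B: "B > 0" unfolding B_def using assms False by (intro sum_pos) auto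
  have "(\<Sum>x\<in>S. a x * ln (a x / b x)) - A * ln (A / B) = (\<Sum>x\<in>S. a x * (ln (a x / b x) - ln (A / B)))"
    by (simp add: A_def sum_subtractf sum_distrib_right right_diff_distrib)
  also have "\<dots> = (\<Sum>x\<in>S. a x * ln ((a x * B) / (b x * A)))"
  proof (rule sum.cong[OF refl])
    show "a x * (ln (a x / b x) - ln (A / B)) = a x * ln ((a x * B) / (b x * A))" if "x \<in> S" for x
    proof -
      have "a x > 0" "b x > 0" using that assms by auto
      then show ?thesis using A B by (simp add: ln_div ln_mult)
    qed
  qed
  also have "\<dots> \<ge> (\<Sum>x\<in>S. a x - b x * A / B)"
  proof (rule sum_mono)
    fix x assume "x \<in> S"
    then have ax: "a x > 0" and bx: "b x > 0" using assms by auto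
    define y where "y = (a x * B) / (b x * A)"
    have y: "y > 0" using ax bx A B by (simp add: y_def)
    have "1 - 1/y \<le> ln y" using ln_le_minus_one[of "1/y"] y by (simp add: ln_div)
    then have "a x * (1 - 1/y) \<le> a x * ln y" using ax by (intro mult_left_mono) auto
    moreover have "a x * (1 - 1/y) = a x - b x * A / B" using ax bx A B by (simp add: y_def field_simps)
    ultimately show "a x - b x * A / B \<le> a x * ln ((a x * B) / (b x * A))" by (simp add: y_def)
  qed
  also have "(\<Sum>x\<in>S. a x - b x * A / B) = 0"
    using B by (simp add: sum_subtractf A_def B_def sum_divide_distrib[symmetric] sum_distrib_right[symmetric])
  finally show ?thesis by (simp add: A_def B_def)
qed simp

text \<open>Coarse-graining: merging the outcomes in A and in its complement cannot increase
  the symmetrised divergence (a data-processing inequality obtained from log_sum_ineq).\<close>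
lemma jeffreys_coarse_grain:
  fixes P Q :: "'a \<Rightarrow> real"
  assumes fin: "finite U" and A: "A \<subseteq> U"
    and P0: "\<forall>u\<in>U. P u > 0" and Q0: "\<forall>u\<in>U. Q u > 0"
    and P1: "(\<Sum>u\<in>U. P u) = 1" and Q1: "(\<Sum>u\<in>U. Q u) = 1"
    and p: "p = (\<Sum>u\<in>A. P u)" and q: "q = (\<Sum>u\<in>A. Q u)"
  shows "p * ln (p/q) + q * ln (q/p) + (1-p) * ln ((1-p)/(1-q)) + (1-q) * ln ((1-q)/(1-p))
           \<le> 2 * jeffreys U P Q"
proof -
  define B where "B = U - A"
  have fins: "finite A" "finite B" using fin A finite_subset by (auto simp: B_def)
  have split: "(\<Sum>u\<in>U. f u) = (\<Sum>u\<in>A. f u) + (\<Sum>u\<in>B. f u)" for f :: "'a \<Rightarrow> real"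
    using fin A by (simp add: B_def sum.subset_diff)
  have pB: "(\<Sum>u\<in>B. P u) = 1 - p" and qB: "(\<Sum>u\<in>B. Q u) = 1 - q"
    using split[of P] split[of Q] P1 Q1 p q by auto
  have pos: "\<forall>u\<in>A. P u > 0" "\<forall>u\<in>A. Q u > 0" "\<forall>u\<in>B. P u > 0" "\<forall>u\<in>B. Q u > 0"
    using P0 Q0 A by (auto simp: B_def)
  have "p * ln (p/q) \<le> (\<Sum>u\<in>A. P u * ln (P u / Q u))"
       "q * ln (q/p) \<le> (\<Sum>u\<in>A. Q u * ln (Q u / P u))"
       "(1-p) * ln ((1-p)/(1-q)) \<le> (\<Sum>u\<in>B. P u * ln (P u / Q u))"
       "(1-q) * ln ((1-q)/(1-p)) \<le> (\<Sum>u\<in>B. Q u * ln (Q u / P u))"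
    using log_sum_ineq[OF fins(1) pos(1,2)] log_sum_ineq[OF fins(1) pos(2,1)]
      log_sum_ineq[OF fins(2) pos(3,4)] log_sum_ineq[OF fins(2) pos(4,3)] p q pB qB by auto
  then show ?thesis
    using split[of "\<lambda>u. P u * ln (P u / Q u)"] split[of "\<lambda>u. Q u * ln (Q u / P u)"]
    by (simp add: jeffreys_def KL_div_def)
qed

text \<open>The bound for two-point distributions (p, 1-p) and (q, 1-q) with q < p, where
  t = p - q: it reduces to the polynomial identity
  p (1-q) (1-t)^2 - (1+t)^2 q (1-p) = t (1-t-2q)^2.\<close>
lemma binary_jeffreys_bound:
  fixes p q :: real
  assumes "0 < q" "q < p" "p < 1"
  shows "2 * phi (p - q)
     \<le> p * ln (p/q) + q * ln (q/p) + (1-p) * ln ((1-p)/(1-q)) + (1-q) * ln ((1-q)/(1-p))"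
proof -
  define t where "t = p - q"
  have t: "0 < t" "t < 1" using assms by (auto simp: t_def)
  have "p * (1-q) * (1-t)^2 - (1+t)^2 * q * (1-p) = t * (1-t-2*q)^2"
    unfolding t_def by (simp add: power2_eq_square algebra_simps)
  then have "(1+t)^2 * q * (1-p) \<le> p * (1-q) * (1-t)^2"
    using t by (smt (verit) mult_nonneg_nonneg zero_le_power2)
  moreover have "0 < (1+t)^2 * q * (1-p)" using t assms by auto
  ultimately have "ln ((1+t)^2 * q * (1-p)) \<le> ln (p * (1-q) * (1-t)^2)" by simp
  then have "2 * ln ((1+t)/(1-t)) \<le> ln p - ln q - ln (1-p) + ln (1-q)"
    using t assms by (simp add: ln_mult ln_realpow ln_div)
  then have "t * (2 * ln ((1+t)/(1-t))) \<le> t * (ln p - ln q - ln (1-p) + ln (1-q))"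
    using t by (intro mult_left_mono) auto
  also have "\<dots> = p * ln (p/q) + q * ln (q/p) + (1-p) * ln ((1-p)/(1-q)) + (1-q) * ln ((1-q)/(1-p))"
    using assms by (simp add: t_def ln_div algebra_simps)
  finally show ?thesis by (simp add: phi_def t_def)
qed

text \<open>Jeffreys' divergence is a sum of the nonnegative terms (P - Q)(ln P - ln Q).\<close>
lemma jeffreys_nonneg:
  assumes "\<forall>u\<in>U. P u > 0" "\<forall>u\<in>U. Q u > 0"
  shows "0 \<le> jeffreys U P Q"
proof -
  have "0 \<le> P u * ln (P u / Q u) + Q u * ln (Q u / P u)" if u: "u \<in> U" for u
  proof -
    have pu: "P u > 0" and qu: "Q u > 0" using u assms by auto
    have "0 \<le> (P u - Q u) * (ln (P u) - ln (Q u))"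
      using pu qu by (cases "Q u \<le> P u") (auto intro: mult_nonneg_nonneg mult_nonpos_nonpos)
    also have "\<dots> = P u * ln (P u / Q u) + Q u * ln (Q u / P u)"
      using pu qu by (simp add: ln_div algebra_simps)
    finally show ?thesis .
  qed
  then show ?thesis by (simp add: jeffreys_def KL_div_def sum.distrib[symmetric] sum_nonneg)
qed

text \<open>Pinsker-type inequality: phi of the total variation distance is at most J(P,Q).
  Coarse-grain onto A = {P \<ge> Q}, where P(A) - Q(A) is the total variation distance.\<close>
lemma jeffreys_total_variation:
  fixes P Q :: "'a \<Rightarrow> real"
  assumes fin: "finite U" and P0: "\<forall>u\<in>U. P u > 0" and Q0: "\<forall>u\<in>U. Q u > 0"
    and P1: "(\<Sum>u\<in>U. P u) = 1" and Q1: "(\<Sum>u\<in>U. Q u) = 1"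
    and t: "t = (\<Sum>u\<in>U. \<bar>P u - Q u\<bar>) / 2"
  shows "0 \<le> t" "t < 1" "phi t \<le> jeffreys U P Q"
proof -
  define A where "A = {u\<in>U. Q u \<le> P u}"
  define p where "p = (\<Sum>u\<in>A. P u)"
  define q where "q = (\<Sum>u\<in>A. Q u)"
  have A: "A \<subseteq> U" "finite A" "finite (U - A)" using fin by (auto simp: A_def)
  have split: "(\<Sum>u\<in>U. f u) = (\<Sum>u\<in>A. f u) + (\<Sum>u\<in>U - A. f u)" for f :: "'a \<Rightarrow> real"
    using fin A by (simp add: sum.subset_diff)
  have pB: "(\<Sum>u\<in>U - A. P u) = 1 - p" and qB: "(\<Sum>u\<in>U - A. Q u) = 1 - q"
    using split[of P] split[of Q] P1 Q1 by (auto simp: p_def q_def)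
  have "(\<Sum>u\<in>A. \<bar>P u - Q u\<bar>) = (\<Sum>u\<in>A. P u - Q u)"
       "(\<Sum>u\<in>U - A. \<bar>P u - Q u\<bar>) = (\<Sum>u\<in>U - A. Q u - P u)"
    by (auto simp: A_def intro!: sum.cong)
  then have "(\<Sum>u\<in>U. \<bar>P u - Q u\<bar>) = (\<Sum>u\<in>A. P u - Q u) + (\<Sum>u\<in>U - A. Q u - P u)"
    using split[of "\<lambda>u. \<bar>P u - Q u\<bar>"] by simp
  then have t_pq: "t = p - q" using pB qB by (simp add: t sum_subtractf p_def q_def)
  show t0: "0 \<le> t" unfolding t by (simp add: sum_nonneg)
  have "t < 1 \<and> phi t \<le> jeffreys U P Q"
  proof (cases "t = 0")
    case True
    then show ?thesis using jeffreys_nonneg[OF P0 Q0] by simp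
  next
    case False
    have "A \<noteq> {}" using False t_pq by (auto simp: p_def q_def)
    then have q0: "0 < q" unfolding q_def using A Q0 by (intro sum_pos) auto
    have "U - A \<noteq> {}"
    proof
      assume "U - A = {}"
      with pB qB have "p = 1" "q = 1" by (metis sum.empty eq_iff_diff_eq_0)+
      then show False using False t_pq by simp
    qed
    then have p1: "0 < 1 - p" unfolding pB[symmetric] using A P0 by (intro sum_pos) auto
    have "2 * phi t \<le> 2 * jeffreys U P Q"
      using binary_jeffreys_bound[of q p] jeffreys_coarse_grain[OF fin A(1) P0 Q0 P1 Q1 p_def q_def]
        q0 p1 False t0 t_pq by simp
    then show ?thesis using t_pq q0 p1 by simp
  qed
  then show "t < 1" "phi t \<le> jeffreys U P Q" by auto
qed

section \<open>The distribution induced by the code lengths\<close>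

lemma dpow_le_prob:
  assumes "real d > 1" "p > 0" "int l \<ge> \<lceil>log (real d) (1 / p)\<rceil>"
  shows "real d powr (- real l) \<le> p"
proof -
  have "log (real d) (1 / p) \<le> real l"
    using assms(3) le_of_int_ceiling[of "log (real d) (1 / p)"] by linarith
  then have "- real l \<le> log (real d) p" using assms by (simp add: log_divide)
  then have "real d powr (- real l) \<le> real d powr log (real d) p" using assms by (intro powr_mono) auto
  then show ?thesis using assms by simp
qed

lemma kraft_sum_pos:
  assumes "finite U" "U \<noteq> {}" "real d > 1"
  shows "0 < kraft_sum U d l"
  using assms by (auto simp: kraft_sum_def intro!: sum_pos)

lemma Q_code_distribution:
  assumes "finite U" "U \<noteq> {}" "real d > 1"
  shows "\<forall>u\<in>U. Q_code U d l u > 0" "(\<Sum>u\<in>U. Q_code U d l u) = 1"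
proof -
  note c = kraft_sum_pos[OF assms, of l]
  then show "\<forall>u\<in>U. Q_code U d l u > 0" using assms by (simp add: Q_code_def)
  show "(\<Sum>u\<in>U. Q_code U d l u) = 1"
    using c by (simp add: Q_code_def sum_divide_distrib[symmetric] kraft_sum_def)
qed

lemma redundancy_nats:
  assumes "\<forall>u\<in>U. P u > 0" "real d > 1"
  shows "redundancy U d P l * ln (real d) = (\<Sum>u\<in>U. P u * ln (P u / real d powr (- real (l u))))"
proof -
  have "redundancy U d P l * ln (real d) = (\<Sum>u\<in>U. P u * real (l u) * ln (real d) + P u * ln (P u))"
    using assms by (simp add: redundancy_def sum_distrib_right sum.distrib log_def distrib_right)
  also have "\<dots> = (\<Sum>u\<in>U. P u * ln (P u / real d powr (- real (l u))))"
    using assms by (intro sum.cong) (auto simp: ln_div ln_powr algebra_simps)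
  finally show ?thesis .
qed

lemma KL_P_Q_code:
  assumes "finite U" "U \<noteq> {}" "real d > 1" "\<forall>u\<in>U. P u > 0" "(\<Sum>u\<in>U. P u) = 1"
  shows "KL_div U P (Q_code U d l) = redundancy U d P l * ln (real d) + ln (kraft_sum U d l)"
proof -
  define c where "c = kraft_sum U d l"
  have c: "c > 0" using kraft_sum_pos[OF assms(1-3)] by (simp add: c_def)
  have "KL_div U P (Q_code U d l)
      = (\<Sum>u\<in>U. P u * ln (P u / real d powr (- real (l u))) + P u * ln c)"
    unfolding KL_div_def using assms c
    by (intro sum.cong) (auto simp: Q_code_def c_def[symmetric] ln_div ln_mult algebra_simps)
  then show ?thesis
    using assms by (simp add: sum.distrib redundancy_nats sum_distrib_right[symmetric] c_def)
qed

text \<open>D(Q||P) \<le> -ln c, because every ratio Q/P is at most 1/c once d^(-l) \<le> P.\<close>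
lemma KL_Q_code_P:
  assumes "finite U" "U \<noteq> {}" "real d > 1" "\<forall>u\<in>U. P u > 0"
    and dom: "\<forall>u\<in>U. real d powr (- real (l u)) \<le> P u"
  shows "KL_div U (Q_code U d l) P \<le> - ln (kraft_sum U d l)"
proof -
  define c where "c = kraft_sum U d l"
  define Q where "Q = Q_code U d l"
  have c: "c > 0" using kraft_sum_pos[OF assms(1-3)] by (simp add: c_def)
  note Q = Q_code_distribution[OF assms(1-3), of l, folded Q_def]
  have "Q u * ln (Q u / P u) \<le> Q u * (- ln c)" if u: "u \<in> U" for u
  proof -
    have "Q u / P u \<le> 1 / c"
      using dom u assms(4) c by (auto simp: Q_def Q_code_def c_def[symmetric] field_simps)
    then have "ln (Q u / P u) \<le> ln (1 / c)" using Q(1) u assms(4) c by (subst ln_le_cancel_iff) auto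
    also have "ln (1 / c) = - ln c" using c by (simp add: ln_div)
    finally have "ln (Q u / P u) \<le> - ln c" .
    then show ?thesis using Q(1) u by (intro mult_left_mono) auto
  qed
  then have "KL_div U Q P \<le> (\<Sum>u\<in>U. Q u * (- ln c))" unfolding KL_div_def by (rule sum_mono)
  also have "\<dots> = - ln c" using Q(2) by (simp add: sum_negf sum_distrib_right[symmetric])
  finally show ?thesis by (simp add: Q_def c_def)
qed

text \<open>First claim: J(P,Q) \<le> Delta_d ln d / 2, the ln c terms cancelling.\<close>
lemma jeffreys_code_bound:
  assumes "finite U" "real d > 1" "\<forall>u\<in>U. P u > 0" "(\<Sum>u\<in>U. P u) = 1"
    and "\<forall>u\<in>U. real d powr (- real (l u)) \<le> P u"
  shows "jeffreys U P (Q_code U d l) \<le> redundancy U d P l * ln (real d) / 2"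
proof -
  have "U \<noteq> {}" using assms(4) by auto
  then show ?thesis
    using KL_P_Q_code[of U d P l] KL_Q_code_P[of U d P l] assms by (simp add: jeffreys_def)
qed

theorem mainTheorem8:
  fixes U :: "'a set" and P :: "'a \<Rightarrow> real" and d :: nat
    and l :: "'a \<Rightarrow> nat" and c :: "'a \<Rightarrow> nat list"
  assumes "finite U"
    and "\<forall>u\<in>U. P u > 0"
    and "(\<Sum>u\<in>U. P u) = 1"
    and "d \<ge> 2"
    and "dary_code d U c"
    and "uniquely_decodable U c"
    and "\<forall>u\<in>U. length (c u) = l u"
    and "\<forall>u\<in>U. int (l u) \<ge> \<lceil>log (real d) (1 / P u)\<rceil>"
  shows "jeffreys U P (Q_code U d l) \<le> redundancy U d P l * ln (real d) / 2
     \<and> (\<Sum>u\<in>U. \<bar>P u - Q_code U d l u\<bar>)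
         \<le> 2 * eps_fun (redundancy U d P l * ln (real d) / 2)"
proof -
  have d: "real d > 1" using assms(4) by simp
  have dom: "\<forall>u\<in>U. real d powr (- real (l u)) \<le> P u"
    using dpow_le_prob[OF d] assms(2,8) by blast
  have J: "jeffreys U P (Q_code U d l) \<le> redundancy U d P l * ln (real d) / 2"
    using jeffreys_code_bound[OF assms(1) d assms(2,3) dom] .
  have "U \<noteq> {}" using assms(3) by auto
  note Q = Q_code_distribution[OF assms(1) this d, of l]
  define t where "t = (\<Sum>u\<in>U. \<bar>P u - Q_code U d l u\<bar>) / 2"
  note tv = jeffreys_total_variation[OF assms(1,2) Q(1) assms(3) Q(2) t_def]
  have "t \<le> eps_fun (redundancy U d P l * ln (real d) / 2)"
    using tv J by (intro le_eps_fun) auto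
  then show ?thesis using J by (simp add: t_def)
qed

end
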